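(* Let $G$ and $H$ be finite graphs. Then \[ n(G)\,\gamma(H)-m(G)\;\le\; \gamma_{\rm S}(G,H)\;\le\; \Gamma_{\rm S}(G,H)\;\le\; n(G)\,\gamma(H), \] where $n(G)=|V(G)|$ and $m(G)=|E(G)|$.
   Context: All graphs are finite and simple; $\gamma(X)$ denotes the domination number of a graph $X$ (the minimum size of a set $S$ of vertices such that every vertex is in $S$ or adjacent to a vertex of $S$). For graphs $G,H$ and a function $f\colon V(G)\to V(H)$, the Sierpiński product $G\otimes_f H$ is the graph with vertex set $V(G)\times V(H)$ and edges of two types: (type 1) $(g,h)(g,h')$ for every $g\in V(G)$ and every edge $hh'\in E(H)$; (type 2) $(g,f(g'))(g',f(g))$ for every edge $gg'\in E(G)$. The Sierpiński domination number is $\gamma_{\rm S}(G,H)=\min_{f}\gamma(G\otimes_f H)$ and the upper Sierpiński domination number is $\Gamma_{\rm S}(G,H)=\max_{f}\gamma(G\otimes_f H)$, where $f$ ranges over all functions $V(G)\to V(H)$. *)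

theory Defs
  imports "HOL-Library.FuncSet"
begin

definition graph :: "'a set \<Rightarrow> 'a set set \<Rightarrow> bool" where
  "graph V E \<longleftrightarrow> finite V \<and> (\<forall>e\<in>E. e \<subseteq> V \<and> card e = 2)"

definition dominating :: "'a set \<Rightarrow> 'a set set \<Rightarrow> 'a set \<Rightarrow> bool" where
  "dominating V E S \<longleftrightarrow> S \<subseteq> V \<and> (\<forall>v\<in>V. v \<in> S \<or> (\<exists>u\<in>S. {u, v} \<in> E))"

definition domination_number :: "'a set \<Rightarrow> 'a set set \<Rightarrow> nat" where
  "domination_number V E = Min (card ` {S. dominating V E S})"

definition sierp_verts :: "'a set \<Rightarrow> 'b set \<Rightarrow> ('a \<times> 'b) set" where
  "sierp_verts VG VH = VG \<times> VH"

definition sierp_edges ::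
  "'a set \<Rightarrow> 'a set set \<Rightarrow> 'b set \<Rightarrow> 'b set set \<Rightarrow> ('a \<Rightarrow> 'b) \<Rightarrow> ('a \<times> 'b) set set" where
  "sierp_edges VG EG VH EH f =
     {{(g, h), (g, h')} | g h h'. g \<in> VG \<and> {h, h'} \<in> EH}
     \<union> {{(g, f g'), (g', f g)} | g g'. {g, g'} \<in> EG}"

definition sierp_domination :: "'a set \<Rightarrow> 'a set set \<Rightarrow> 'b set \<Rightarrow> 'b set set \<Rightarrow> nat" where
  "sierp_domination VG EG VH EH =
     Min ((\<lambda>f. domination_number (sierp_verts VG VH) (sierp_edges VG EG VH EH f)) ` (VG \<rightarrow>\<^sub>E VH))"

definition upper_sierp_domination :: "'a set \<Rightarrow> 'a set set \<Rightarrow> 'b set \<Rightarrow> 'b set set \<Rightarrow> nat" where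
  "upper_sierp_domination VG EG VH EH =
     Max ((\<lambda>f. domination_number (sierp_verts VG VH) (sierp_edges VG EG VH EH f)) ` (VG \<rightarrow>\<^sub>E VH))"

end

theory Submission
  imports Defs
begin

text \<open>The upper bound: for every \<open>f\<close>, a minimum dominating set \<open>D\<close> of \<open>H\<close> copied into every
  \<open>H\<close>-layer, \<open>V(G) \<times> D\<close>, dominates \<open>G \<otimes>\<^sub>f H\<close> through type-1 edges alone.
  The lower bound: a dominating set \<open>S\<close> of \<open>G \<otimes>\<^sub>f H\<close> restricted to the layer of \<open>g\<close>
  dominates that layer except for vertices \<open>(g, f g')\<close> dominated across a type-2 edge from
  \<open>(g', f g)\<close>; adding the vertices \<open>f g'\<close> repairs this.  Orienting each edge \<open>gg'\<close> of \<open>G\<close>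
  towards the endpoint that needs such a repair, at most one repair per edge is required, so
  \<open>n(G) \<gamma>(H) \<le> |S| + m(G)\<close>.\<close>

lemma finite_dominating_cards:
  assumes "finite V"
  shows "finite (card ` {S. dominating V E S})"
proof -
  have "{S. dominating V E S} \<subseteq> Pow V" by (auto simp: dominating_def)
  then show ?thesis using assms finite_subset by blast
qed

lemma domination_number_le:
  assumes "finite V" "dominating V E S"
  shows "domination_number V E \<le> card S"
  unfolding domination_number_def using finite_dominating_cards[OF assms(1)] assms(2)
  by (intro Min_le) auto

lemma domination_number_attained:
  assumes "finite V"
  obtains S where "dominating V E S" "card S = domination_number V E"
proof -
  have "dominating V E V" by (auto simp: dominating_def)
  then have "domination_number V E \<in> card ` {S. dominating V E S}"
    unfolding domination_number_def using finite_dominating_cards[OF assms]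
    by (intro Min_in) auto
  then show thesis using that by auto
qed

lemma sierp_edge_cases:
  assumes "{u, (g, h)} \<in> sierp_edges VG EG VH EH f"
  obtains (layer) h' where "u = (g, h')" "{h', h} \<in> EH"
    | (bridge) g' where "{g, g'} \<in> EG" "h = f g'" "u = (g', f g)"
proof -
  from assms consider (layer_edge) g1 h1 h1' where "{u, (g, h)} = {(g1, h1), (g1, h1')}" "{h1, h1'} \<in> EH"
    | (bridge_edge) g1 g2 where "{u, (g, h)} = {(g1, f g2), (g2, f g1)}" "{g1, g2} \<in> EG"
    unfolding sierp_edges_def by blast
  then show thesis
  proof cases
    case layer_edge
    have "{h1', h1} \<in> EH" using layer_edge(2) by (simp add: insert_commute)
    then show thesis using layer_edge by (auto simp: doubleton_eq_iff intro: layer)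
  next
    case bridge_edge
    have "{g2, g1} \<in> EG" using bridge_edge(2) by (simp add: insert_commute)
    then show thesis using bridge_edge by (auto simp: doubleton_eq_iff intro: bridge)
  qed
qed

lemma dominating_sierp_Times:
  assumes "dominating VH EH D"
  shows "dominating (sierp_verts VG VH) (sierp_edges VG EG VH EH f) (VG \<times> D)"
  unfolding dominating_def sierp_verts_def
proof (intro conjI ballI)
  show "VG \<times> D \<subseteq> VG \<times> VH" using assms by (auto simp: dominating_def)
  fix v assume "v \<in> VG \<times> VH"
  then obtain g h where gh: "v = (g, h)" "g \<in> VG" "h \<in> VH" by auto
  then consider "h \<in> D" | u where "u \<in> D" "{u, h} \<in> EH"
    using assms by (auto simp: dominating_def)
  then show "v \<in> VG \<times> D \<or> (\<exists>u\<in>VG \<times> D. {u, v} \<in> sierp_edges VG EG VH EH f)"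
  proof cases
    case 1
    then show ?thesis using gh by auto
  next
    case (2 u)
    then have "{(g, u), (g, h)} \<in> sierp_edges VG EG VH EH f"
      using gh unfolding sierp_edges_def by blast
    then show ?thesis using gh 2 by blast
  qed
qed

lemma domination_number_sierp_le:
  assumes "finite VG" "finite VH"
  shows "domination_number (sierp_verts VG VH) (sierp_edges VG EG VH EH f)
           \<le> card VG * domination_number VH EH"
proof -
  obtain D where D: "dominating VH EH D" "card D = domination_number VH EH"
    using domination_number_attained[OF assms(2)] by blast
  have "domination_number (sierp_verts VG VH) (sierp_edges VG EG VH EH f) \<le> card (VG \<times> D)"
    using assms by (intro domination_number_le dominating_sierp_Times D(1))
      (simp add: sierp_verts_def)
  also have "\<dots> = card VG * domination_number VH EH"
    using D by (simp add: card_cartesian_product)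
  finally show ?thesis .
qed

text \<open>The condition \<open>(g, f g') \<notin> S\<close> charges each edge \<open>gg'\<close> of \<open>G\<close> to at most one
  of its endpoints.\<close>

definition bridge_repairs :: "'a set set \<Rightarrow> ('a \<Rightarrow> 'b) \<Rightarrow> ('a \<times> 'b) set \<Rightarrow> 'a \<Rightarrow> 'a set" where
  "bridge_repairs EG f S g = {g'. {g, g'} \<in> EG \<and> (g', f g) \<in> S \<and> (g, f g') \<notin> S}"

lemma dominating_layer_repaired:
  assumes "dominating (sierp_verts VG VH) (sierp_edges VG EG VH EH f) S"
    and "graph VG EG" "f \<in> VG \<rightarrow> VH" "g \<in> VG"
  shows "dominating VH EH (S `` {g} \<union> f ` bridge_repairs EG f S g)"
  unfolding dominating_def
proof (intro conjI ballI)
  have "bridge_repairs EG f S g \<subseteq> VG"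
    using assms(2) by (auto simp: bridge_repairs_def graph_def)
  then show "S `` {g} \<union> f ` bridge_repairs EG f S g \<subseteq> VH"
    using assms(1,3) by (auto simp: dominating_def sierp_verts_def)
  fix h assume h: "h \<in> VH"
  show "h \<in> S `` {g} \<union> f ` bridge_repairs EG f S g
        \<or> (\<exists>u\<in>S `` {g} \<union> f ` bridge_repairs EG f S g. {u, h} \<in> EH)"
  proof (cases "(g, h) \<in> S")
    case False
    then obtain u where u: "u \<in> S" "{u, (g, h)} \<in> sierp_edges VG EG VH EH f"
      using assms(1,4) h unfolding dominating_def sierp_verts_def by blast
    from u(2) show ?thesis
    proof (cases rule: sierp_edge_cases)
      case (layer h')
      then show ?thesis using u(1) by auto
    next
      case (bridge g')
      then have "g' \<in> bridge_repairs EG f S g"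
        using u(1) False by (auto simp: bridge_repairs_def)
      then show ?thesis using bridge by auto
    qed
  qed auto
qed

lemma sum_card_orientation_le:
  assumes "finite V" "finite E"
    and edge: "\<And>g g'. g \<in> V \<Longrightarrow> g' \<in> B g \<Longrightarrow> {g, g'} \<in> E \<and> g' \<in> V"
    and antisym: "\<And>g g'. g' \<in> B g \<Longrightarrow> g \<notin> B g'"
  shows "(\<Sum>g\<in>V. card (B g)) \<le> card E"
proof -
  have "(\<Sum>g\<in>V. card (B g)) = card (Sigma V B)"
    using assms(1) edge by (subst card_SigmaI) (auto intro: finite_subset[of _ V])
  also have "\<dots> \<le> card E"
  proof (rule card_inj_on_le[where f = "\<lambda>(a, b). {a, b}"])
    show "inj_on (\<lambda>(a, b). {a, b}) (Sigma V B)"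
      using antisym unfolding inj_on_def by (auto simp: doubleton_eq_iff)
  qed (use assms(2) edge in auto)
  finally show ?thesis .
qed

lemma domination_number_sierp_ge:
  assumes "graph VG EG" "graph VH EH" and f: "f \<in> VG \<rightarrow> VH"
  shows "card VG * domination_number VH EH
           \<le> domination_number (sierp_verts VG VH) (sierp_edges VG EG VH EH f) + card EG"
proof -
  have fG: "finite VG" and fH: "finite VH" and EG: "\<And>e. e \<in> EG \<Longrightarrow> e \<subseteq> VG"
    using assms by (auto simp: graph_def)
  have finEG: "finite EG" using fG EG by (intro finite_subset[of EG "Pow VG"]) auto
  obtain S where S: "dominating (sierp_verts VG VH) (sierp_edges VG EG VH EH f) S"
      "card S = domination_number (sierp_verts VG VH) (sierp_edges VG EG VH EH f)"
    using domination_number_attained[of "sierp_verts VG VH"] fG fH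
    by (auto simp: sierp_verts_def)
  have S_sub: "S \<subseteq> VG \<times> VH" using S(1) by (auto simp: dominating_def sierp_verts_def)
  let ?B = "bridge_repairs EG f S"
  have "card VG * domination_number VH EH = (\<Sum>g\<in>VG. domination_number VH EH)" by simp
  also have "\<dots> \<le> (\<Sum>g\<in>VG. card (S `` {g} \<union> f ` ?B g))"
    using dominating_layer_repaired[OF S(1) assms(1) f] fH
    by (intro sum_mono domination_number_le)
  also have "\<dots> \<le> (\<Sum>g\<in>VG. card (S `` {g}) + card (?B g))"
    by (intro sum_mono order.trans[OF card_Un_le] add_left_mono card_image_le)
      (use fG EG in \<open>auto simp: bridge_repairs_def intro: finite_subset[of _ VG]\<close>)
  also have "\<dots> = card S + (\<Sum>g\<in>VG. card (?B g))"
  proof -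
    have "S = Sigma VG (\<lambda>g. S `` {g})" using S_sub by auto
    then have "card S = (\<Sum>g\<in>VG. card (S `` {g}))"
      using fG fH S_sub by (metis card_SigmaI finite_Image finite_SigmaI finite_subset)
    then show ?thesis by (simp add: sum.distrib)
  qed
  also have "(\<Sum>g\<in>VG. card (?B g)) \<le> card EG"
    using fG finEG EG by (intro sum_card_orientation_le) (auto simp: bridge_repairs_def)
  finally show ?thesis using S(2) by simp
qed

theorem theorem2p1:
  fixes VG :: "'a set" and EG :: "'a set set" and VH :: "'b set" and EH :: "'b set set"
  assumes "graph VG EG" and "graph VH EH"
    and "VG \<noteq> {}" and "VH \<noteq> {}"
  shows "int (card VG) * int (domination_number VH EH) - int (card EG)
           \<le> int (sierp_domination VG EG VH EH)
         \<and> sierp_domination VG EG VH EH \<le> upper_sierp_domination VG EG VH EH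
         \<and> upper_sierp_domination VG EG VH EH \<le> card VG * domination_number VH EH"
proof -
  have fG: "finite VG" and fH: "finite VH" using assms by (auto simp: graph_def)
  define \<gamma> where "\<gamma> f = domination_number (sierp_verts VG VH) (sierp_edges VG EG VH EH f)" for f
  define \<Gamma> where "\<Gamma> = \<gamma> ` (VG \<rightarrow>\<^sub>E VH)"
  have min: "sierp_domination VG EG VH EH = Min \<Gamma>"
    and max: "upper_sierp_domination VG EG VH EH = Max \<Gamma>"
    by (simp_all add: sierp_domination_def upper_sierp_domination_def \<Gamma>_def \<gamma>_def)
  have fin: "finite \<Gamma>" using fG fH unfolding \<Gamma>_def by (intro finite_imageI finite_PiE)
  have ne: "\<Gamma> \<noteq> {}" using assms(4) by (auto simp: \<Gamma>_def PiE_eq_empty_iff)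
  obtain f where f: "f \<in> VG \<rightarrow>\<^sub>E VH" "Min \<Gamma> = \<gamma> f"
    using Min_in[OF fin ne] unfolding \<Gamma>_def by blast
  obtain f' where f': "Max \<Gamma> = \<gamma> f'"
    using Max_in[OF fin ne] unfolding \<Gamma>_def by blast
  have "f \<in> VG \<rightarrow> VH" using f(1) by (simp add: PiE_iff)
  then have "card VG * domination_number VH EH \<le> Min \<Gamma> + card EG"
    using domination_number_sierp_ge[OF assms(1,2)] f(2)
    unfolding \<gamma>_def by simp
  then have "int (card VG) * int (domination_number VH EH) \<le> int (Min \<Gamma>) + int (card EG)"
    by (simp only: of_nat_mult[symmetric] of_nat_add[symmetric] of_nat_le_iff)
  moreover have "Min \<Gamma> \<le> Max \<Gamma>" using fin ne by (intro Min_le Max_in)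
  moreover have "Max \<Gamma> \<le> card VG * domination_number VH EH"
    using domination_number_sierp_le[OF fG fH] f' unfolding \<gamma>_def by simp
  ultimately show ?thesis unfolding min max by linarith
qed

end
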